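(* For scheduling without payments any number $m$ of tasks on any number $n$ of machines, the Greedy algorithm has Price of Stability $1$ (with respect to mixed Nash equilibria): for every true instance, there is a mixed Nash equilibrium of Greedy whose expected makespan equals the optimal makespan.
   Context: Model: $n$ machines, $m$ indivisible tasks; machine $i$ has private true times $t_{i,j}\ge0$ and declares $\hat t_{i,j}\ge0$. Machines are bound by their declarations: machine $i$ executes an assigned task $j$ for time $\max\{\hat t_{i,j},t_{i,j}\}$. The Greedy algorithm assigns each task $j$ independently to a machine with minimum declared cost $\hat t_{i,j}$ (ties broken arbitrarily). In a mixed strategy profile each machine independently draws her declaration matrix row from a probability distribution; a machine's cost is her expected total execution time $\mathbb E[\sum_j A_{i,j}\max\{\hat t_{i,j},t_{i,j}\}]$, where $A_{i,j}$ indicates that task $j$ is assigned to $i$. A mixed Nash equilibrium is a profile in which no machine can strictly decrease her expected cost by unilaterally changing her strategy. The makespan of a profile is $\mathbb E[\max_i\sum_jA_{i,j}\max\{\hat t_{i,j},t_{i,j}\}]$, and the optimal makespan is $\min_A\max_i\sum_jA_{i,j}t_{i,j}$ over integral allocations. The Price of Stability is the supremum over instances of the ratio between the makespan of the best mixed Nash equilibrium and the optimal makespan. *)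

theory Defs
  imports "HOL-Probability.Probability"
begin

(* Machines are indexed by {..<n}, tasks by {..<m}.
   A declaration matrix D :: nat => nat => real has D i j = declared time of machine i for task j.
   A tie-breaking rule tb :: nat => (nat => real) => nat maps a task j and the declared column
   (lambda i. D i j) to the chosen machine. *)

definition valid_tiebreak :: "nat \<Rightarrow> nat \<Rightarrow> (nat \<Rightarrow> (nat \<Rightarrow> real) \<Rightarrow> nat) \<Rightarrow> bool" where
  "valid_tiebreak n m tb \<longleftrightarrow>
     (\<forall>j<m. \<forall>c. tb j c < n \<and> (\<forall>i<n. c (tb j c) \<le> c i))"

definition greedy_assign :: "(nat \<Rightarrow> (nat \<Rightarrow> real) \<Rightarrow> nat) \<Rightarrow> (nat \<Rightarrow> nat \<Rightarrow> real) \<Rightarrow> nat \<Rightarrow> nat" where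
  "greedy_assign tb D j = tb j (\<lambda>i. D i j)"

(* realized execution load of machine i: bound by declarations, executes for max(decl, true) *)
definition load :: "nat \<Rightarrow> (nat \<Rightarrow> nat \<Rightarrow> real) \<Rightarrow> (nat \<Rightarrow> (nat \<Rightarrow> real) \<Rightarrow> nat)
                     \<Rightarrow> (nat \<Rightarrow> nat \<Rightarrow> real) \<Rightarrow> nat \<Rightarrow> real" where
  "load m t tb D i = (\<Sum>j<m. if greedy_assign tb D j = i then max (D i j) (t i j) else 0)"

definition valid_strategy :: "nat \<Rightarrow> (nat \<Rightarrow> real) pmf \<Rightarrow> bool" where
  "valid_strategy m p \<longleftrightarrow> (\<forall>d\<in>set_pmf p. \<forall>j<m. d j \<ge> 0)"

definition valid_profile :: "nat \<Rightarrow> nat \<Rightarrow> (nat \<Rightarrow> (nat \<Rightarrow> real) pmf) \<Rightarrow> bool" where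
  "valid_profile n m \<sigma> \<longleftrightarrow> (\<forall>i<n. valid_strategy m (\<sigma> i))"

definition joint :: "nat \<Rightarrow> (nat \<Rightarrow> (nat \<Rightarrow> real) pmf) \<Rightarrow> (nat \<Rightarrow> nat \<Rightarrow> real) pmf" where
  "joint n \<sigma> = Pi_pmf {..<n} (\<lambda>_. 0) \<sigma>"

definition exp_cost :: "nat \<Rightarrow> nat \<Rightarrow> (nat \<Rightarrow> nat \<Rightarrow> real) \<Rightarrow> (nat \<Rightarrow> (nat \<Rightarrow> real) \<Rightarrow> nat)
                        \<Rightarrow> (nat \<Rightarrow> (nat \<Rightarrow> real) pmf) \<Rightarrow> nat \<Rightarrow> ennreal" where
  "exp_cost n m t tb \<sigma> i = (\<integral>\<^sup>+ D. ennreal (load m t tb D i) \<partial>measure_pmf (joint n \<sigma>))"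

definition exp_makespan :: "nat \<Rightarrow> nat \<Rightarrow> (nat \<Rightarrow> nat \<Rightarrow> real) \<Rightarrow> (nat \<Rightarrow> (nat \<Rightarrow> real) \<Rightarrow> nat)
                        \<Rightarrow> (nat \<Rightarrow> (nat \<Rightarrow> real) pmf) \<Rightarrow> ennreal" where
  "exp_makespan n m t tb \<sigma> =
     (\<integral>\<^sup>+ D. ennreal (Max ((\<lambda>i. load m t tb D i) ` {..<n})) \<partial>measure_pmf (joint n \<sigma>))"

definition mixed_NE :: "nat \<Rightarrow> nat \<Rightarrow> (nat \<Rightarrow> nat \<Rightarrow> real) \<Rightarrow> (nat \<Rightarrow> (nat \<Rightarrow> real) \<Rightarrow> nat)
                        \<Rightarrow> (nat \<Rightarrow> (nat \<Rightarrow> real) pmf) \<Rightarrow> bool" where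
  "mixed_NE n m t tb \<sigma> \<longleftrightarrow> valid_profile n m \<sigma> \<and>
     (\<forall>i<n. \<forall>\<tau>. valid_strategy m \<tau> \<longrightarrow>
        exp_cost n m t tb \<sigma> i \<le> exp_cost n m t tb (\<sigma>(i := \<tau>)) i)"

definition opt_makespan :: "nat \<Rightarrow> nat \<Rightarrow> (nat \<Rightarrow> nat \<Rightarrow> real) \<Rightarrow> real" where
  "opt_makespan n m t =
     Min ((\<lambda>A. Max ((\<lambda>i. \<Sum>j\<in>{j. j < m \<and> A j = i}. t i j) ` {..<n})) ` ({..<m} \<rightarrow>\<^sub>E {..<n}))"

end

theory Submission
  imports Defs
begin

text \<open>Fix an optimal allocation \<open>A\<close> and a bound \<open>T\<close> on all true times. Every machine
  declares \<open>0\<close> on its own tasks under \<open>A\<close> and one common random bid \<open>X \<ge> T\<close> on every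
  other task. Greedy then realises \<open>A\<close> with truthful execution times, so the makespan is optimal.
  A machine that declares \<open>c\<close> on one of its own tasks keeps it only if the \<open>n - 1\<close> other
  bids exceed \<open>c\<close>, and the tail of \<open>X\<close> is chosen so that
  \<open>max c t \<cdot> P(X > c)^(n-1) \<ge> T \<ge> t\<close>: no deviation lowers the expected cost of any own task,
  and foreign tasks only add cost.\<close>

lemma geometric_pmf_half_atLeast:
  "measure_pmf.prob (geometric_pmf (1/2)) {k..} = (1/2::real) ^ k"
proof -
  have "(\<Sum>i<k. pmf (geometric_pmf (1/2)) i) = 1 - (1/2::real) ^ k"
    by (induction k) (simp_all add: field_simps)
  then have "measure_pmf.prob (geometric_pmf (1/2)) {..<k} = 1 - (1/2::real) ^ k"
    by (simp add: measure_measure_pmf_finite)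
  moreover have "{k..} = UNIV - {..<k}" by auto
  ultimately show ?thesis
    using measure_pmf.prob_compl[of "{..<k}" "geometric_pmf (1/2)"] by simp
qed

text \<open>The tail is heavy
  enough that \<open>e\<close> independent bids all exceed any \<open>c \<ge> T\<close> with probability at least \<open>T / c\<close>.\<close>

definition deterrent_pmf :: "real \<Rightarrow> nat \<Rightarrow> real pmf" where
  "deterrent_pmf T e = map_pmf (\<lambda>k. T * 2 ^ ((k + 1) * e)) (geometric_pmf (1/2))"

lemma set_deterrent_pmf_ge: "0 \<le> T \<Longrightarrow> x \<in> set_pmf (deterrent_pmf T e) \<Longrightarrow> T \<le> x"
  unfolding deterrent_pmf_def by (auto simp: mult_le_cancel_left1)

lemma prob_deterrent_pmf_greater:
  assumes "0 \<le> T" and "c < T * 2 ^ ((k + 1) * e)"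
  shows "(1/2) ^ k \<le> measure_pmf.prob (deterrent_pmf T e) {x. c < x}"
proof -
  have "{k..} \<subseteq> (\<lambda>l. T * 2 ^ ((l + 1) * e)) -` {x. c < x}"
  proof
    fix l assume "l \<in> {k..}"
    then have "T * 2 ^ ((k + 1) * e) \<le> T * 2 ^ ((l + 1) * e)"
      using assms(1) by (intro mult_left_mono power_increasing) auto
    then show "l \<in> (\<lambda>l. T * 2 ^ ((l + 1) * e)) -` {x. c < x}"
      using assms(2) by simp
  qed
  then have "measure_pmf.prob (geometric_pmf (1/2)) {k..}
      \<le> measure_pmf.prob (deterrent_pmf T e) {x. c < x}"
    unfolding deterrent_pmf_def measure_map_pmf by (rule measure_pmf.finite_measure_mono) simp
  then show ?thesis by (simp add: geometric_pmf_half_atLeast)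
qed

lemma deterrent_level:
  fixes T c :: real
  assumes "0 < T" and "1 \<le> e" and "T \<le> c"
  obtains k where "T * 2 ^ (k * e) \<le> c" and "c < T * 2 ^ ((k + 1) * e)"
proof -
  have "1 < (2::real) ^ e" using assms(2) by (simp add: one_less_power)
  then obtain N where "c / T < (2 ^ e) ^ N" using real_arch_pow by blast
  moreover have "(2::real) ^ (N * e) = (2 ^ e) ^ N" by (metis power_mult mult.commute)
  ultimately have "c < T * 2 ^ (N * e)" using assms(1) by (simp add: field_simps)
  then obtain k where "\<forall>i\<le>k. \<not> c < T * 2 ^ (i * e)" "c < T * 2 ^ (Suc k * e)"
    using ex_least_nat_less[of "\<lambda>k. c < T * 2 ^ (k * e)" N] assms(3) by auto
  then have "T * 2 ^ (k * e) \<le> c" "c < T * 2 ^ ((k + 1) * e)" by (simp_all add: not_less)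
  then show ?thesis by (rule that)
qed

lemma deterrent_pmf_deters:
  assumes "0 < T" and "0 \<le> t" and "t \<le> T"
  shows "t \<le> max c t * measure_pmf.prob (deterrent_pmf T e) {x. c < x} ^ e"
proof (cases "T \<le> c \<and> 1 \<le> e")
  case False
  then consider "c < T" | "e = 0" by linarith
  then show ?thesis
  proof cases
    case 1
    then have "measure_pmf.prob (deterrent_pmf T e) {x. c < x} = 1"
      using set_deterrent_pmf_ge[of T _ e] assms(1)
      by (force simp: measure_pmf.prob_eq_1 AE_measure_pmf_iff)
    then show ?thesis by simp
  qed simp
next
  case True
  then obtain k where k: "T * 2 ^ (k * e) \<le> c" "c < T * 2 ^ ((k + 1) * e)"
    using deterrent_level assms(1) by blast
  have "t * 2 ^ (k * e) \<le> T * 2 ^ (k * e)" using assms(3) by (intro mult_right_mono) auto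
  also have "\<dots> \<le> c" by (rule k(1))
  finally have "t \<le> c * (1/2) ^ (k * e)" by (simp add: field_simps power_one_over)
  also have "\<dots> = c * ((1/2) ^ k) ^ e" by (simp add: power_mult)
  also have "\<dots> \<le> c * measure_pmf.prob (deterrent_pmf T e) {x. c < x} ^ e"
    using prob_deterrent_pmf_greater[OF _ k(2)] assms(1) True
    by (intro mult_left_mono power_mono) auto
  also have "\<dots> = max c t * measure_pmf.prob (deterrent_pmf T e) {x. c < x} ^ e"
    using True assms(3) by simp
  finally show ?thesis .
qed

definition task_cost ::
    "(nat \<Rightarrow> nat \<Rightarrow> real) \<Rightarrow> (nat \<Rightarrow> (nat \<Rightarrow> real) \<Rightarrow> nat) \<Rightarrow> (nat \<Rightarrow> nat \<Rightarrow> real) \<Rightarrow> nat \<Rightarrow> nat \<Rightarrow> real"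
  where "task_cost t tb D i j = (if greedy_assign tb D j = i then max (D i j) (t i j) else 0)"

lemma load_eq_sum_task_cost: "load m t tb D i = (\<Sum>j<m. task_cost t tb D i j)"
  unfolding load_def task_cost_def ..

lemma task_cost_nonneg: "0 \<le> t i j \<Longrightarrow> 0 \<le> task_cost t tb D i j"
  unfolding task_cost_def by auto

lemma greedy_assign_strict_min:
  assumes "valid_tiebreak n m tb" and "j < m" and "a < n"
    and "\<And>i. i < n \<Longrightarrow> i \<noteq> a \<Longrightarrow> D a j < D i j"
  shows "greedy_assign tb D j = a"
proof -
  have "\<forall>c. tb j c < n \<and> (\<forall>i<n. c (tb j c) \<le> c i)"
    using assms(1,2) unfolding valid_tiebreak_def by simp
  then have "tb j (\<lambda>i. D i j) < n" and "D (tb j (\<lambda>i. D i j)) j \<le> D a j"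
    using assms(3) by (auto dest: spec[of _ "\<lambda>i. D i j"])
  then show ?thesis using assms(4) unfolding greedy_assign_def by (metis leD)
qed

lemma joint_fun_upd:
  assumes "a < n"
  shows "joint n (\<sigma>(a := \<tau>))
    = map_pmf (\<lambda>(y, f). f(a := y)) (pair_pmf \<tau> (Pi_pmf ({..<n} - {a}) (\<lambda>_. 0) \<sigma>))"
proof -
  have split: "{..<n} = insert a ({..<n} - {a})" using assms by auto
  have "Pi_pmf ({..<n} - {a}) (\<lambda>_. 0) (\<sigma>(a := \<tau>)) = Pi_pmf ({..<n} - {a}) (\<lambda>_. 0) \<sigma>"
    by (rule Pi_pmf_cong) auto
  then show ?thesis
    unfolding joint_def using Pi_pmf_insert[of "{..<n} - {a}" a "\<lambda>_. 0" "\<sigma>(a := \<tau>)"]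
    by (subst split) simp
qed

definition threat_profile :: "nat \<Rightarrow> real \<Rightarrow> (nat \<Rightarrow> nat) \<Rightarrow> nat \<Rightarrow> (nat \<Rightarrow> real) pmf" where
  "threat_profile n T A i = map_pmf (\<lambda>x j. if A j = i then 0 else x) (deterrent_pmf T (n - 1))"

lemma valid_profile_threat_profile:
  assumes "0 \<le> T"
  shows "valid_profile n m (threat_profile n T A)"
proof -
  have "0 \<le> x" if "x \<in> set_pmf (deterrent_pmf T (n - 1))" for x
    using set_deterrent_pmf_ge[OF assms that] assms by linarith
  then show ?thesis
    unfolding valid_profile_def valid_strategy_def threat_profile_def by auto
qed

lemma threat_profile_row:
  assumes "0 \<le> T" and "D \<in> set_pmf (joint n (threat_profile n T A))" and "i < n"
  obtains x where "T \<le> x" and "D i = (\<lambda>j. if A j = i then 0 else x)"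
proof -
  have "D i \<in> set_pmf (threat_profile n T A i)"
    using assms(2,3) unfolding joint_def set_Pi_pmf[OF finite_lessThan] PiE_dflt_def by auto
  then obtain x where "x \<in> set_pmf (deterrent_pmf T (n - 1))" "D i = (\<lambda>j. if A j = i then 0 else x)"
    unfolding threat_profile_def by auto
  then show ?thesis using that set_deterrent_pmf_ge[OF assms(1)] by blast
qed

lemma greedy_assign_threat_profile:
  assumes "valid_tiebreak n m tb" and "0 < T" and "A \<in> {..<m} \<rightarrow>\<^sub>E {..<n}"
    and "D \<in> set_pmf (joint n (threat_profile n T A))" and "j < m"
  shows "greedy_assign tb D j = A j"
proof (rule greedy_assign_strict_min[OF assms(1,5)])
  show Aj: "A j < n" using assms(3,5) by auto
  fix i assume "i < n" "i \<noteq> A j"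
  obtain x' where "D (A j) = (\<lambda>j'. if A j' = A j then 0 else x')"
    using threat_profile_row[OF _ assms(4) Aj] assms(2) by auto
  then have "D (A j) j = 0" by simp
  moreover obtain x where "T \<le> x" "D i = (\<lambda>j. if A j = i then 0 else x)"
    using threat_profile_row[OF _ assms(4) \<open>i < n\<close>] assms(2) by auto
  ultimately show "D (A j) j < D i j" using assms(2) \<open>i \<noteq> A j\<close> by auto
qed

lemma load_threat_profile:
  assumes "valid_tiebreak n m tb" and "0 < T" and "A \<in> {..<m} \<rightarrow>\<^sub>E {..<n}"
    and "\<forall>i<n. \<forall>j<m. 0 \<le> t i j"
    and "D \<in> set_pmf (joint n (threat_profile n T A))" and "i < n"
  shows "load m t tb D i = (\<Sum>j\<in>{j. j < m \<and> A j = i}. t i j)"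
proof -
  obtain x where "D i = (\<lambda>j. if A j = i then 0 else x)"
    using threat_profile_row[OF _ assms(5,6)] assms(2) by auto
  then have "load m t tb D i = (\<Sum>j<m. if A j = i then t i j else 0)"
    unfolding load_eq_sum_task_cost task_cost_def
    using greedy_assign_threat_profile[OF assms(1-3,5)] assms(4,6) by (intro sum.cong) auto
  also have "\<dots> = (\<Sum>j\<in>{j. j < m \<and> A j = i}. t i j)"
    by (simp add: sum.If_cases Collect_conj_eq lessThan_def Int_commute)
  finally show ?thesis .
qed

lemma exp_cost_threat_profile:
  assumes "valid_tiebreak n m tb" and "0 < T" and "A \<in> {..<m} \<rightarrow>\<^sub>E {..<n}"
    and "\<forall>i<n. \<forall>j<m. 0 \<le> t i j" and "i < n"
  shows "exp_cost n m t tb (threat_profile n T A) i = ennreal (\<Sum>j\<in>{j. j < m \<and> A j = i}. t i j)"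
  unfolding exp_cost_def
  using load_threat_profile[OF assms(1-4) _ assms(5)]
  by (subst nn_integral_cong_AE[where v = "\<lambda>_. ennreal (\<Sum>j\<in>{j. j < m \<and> A j = i}. t i j)"])
     (simp_all add: AE_measure_pmf_iff)

lemma exp_makespan_threat_profile:
  assumes "valid_tiebreak n m tb" and "0 < T" and "A \<in> {..<m} \<rightarrow>\<^sub>E {..<n}"
    and "\<forall>i<n. \<forall>j<m. 0 \<le> t i j"
  shows "exp_makespan n m t tb (threat_profile n T A)
    = ennreal (Max ((\<lambda>i. \<Sum>j\<in>{j. j < m \<and> A j = i}. t i j) ` {..<n}))"
proof -
  have "(\<lambda>i. load m t tb D i) ` {..<n} = (\<lambda>i. \<Sum>j\<in>{j. j < m \<and> A j = i}. t i j) ` {..<n}"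
    if "D \<in> set_pmf (joint n (threat_profile n T A))" for D
    using load_threat_profile[OF assms that] by (intro image_cong) auto
  then show ?thesis
    unfolding exp_makespan_def
    by (subst nn_integral_cong_AE[where v = "\<lambda>_. ennreal (Max ((\<lambda>i. \<Sum>j\<in>{j. j < m \<and> A j = i}. t i j) ` {..<n}))"])
       (simp_all add: AE_measure_pmf_iff)
qed

lemma threat_profile_outbid:
  assumes "a < n" and "A j = a"
  shows "(\<integral>\<^sup>+f. (\<Prod>b\<in>{..<n} - {a}. indicator {d. c < d j} (f b))
            \<partial>measure_pmf (Pi_pmf ({..<n} - {a}) (\<lambda>_. 0) (threat_profile n T A)))
    = ennreal (measure_pmf.prob (deterrent_pmf T (n - 1)) {x. c < x}) ^ (n - 1)"
proof -
  have "(\<integral>\<^sup>+d. indicator {d. c < d j} d \<partial>measure_pmf (threat_profile n T A b))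
      = ennreal (measure_pmf.prob (deterrent_pmf T (n - 1)) {x. c < x})" if "b \<in> {..<n} - {a}" for b
  proof -
    have "(\<lambda>x. indicator {d. c < d j} (\<lambda>j'. if A j' = b then 0 else x) :: ennreal) = indicator {x. c < x}"
      using that assms(2) by (auto simp: indicator_def)
    then show ?thesis
      unfolding threat_profile_def nn_integral_map_pmf by (simp add: measure_pmf.emeasure_eq_measure)
  qed
  then have "(\<integral>\<^sup>+f. (\<Prod>b\<in>{..<n} - {a}. indicator {d. c < d j} (f b))
            \<partial>measure_pmf (Pi_pmf ({..<n} - {a}) (\<lambda>_. 0) (threat_profile n T A)))
    = (\<Prod>b\<in>{..<n} - {a}. ennreal (measure_pmf.prob (deterrent_pmf T (n - 1)) {x. c < x}))"
    by (subst nn_integral_prod_Pi_pmf) auto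
  moreover have "card ({..<n} - {a}) = n - 1" using assms(1) by simp
  ultimately show ?thesis by simp
qed

lemma threat_profile_deviation_task_cost:
  assumes "valid_tiebreak n m tb" and "0 < T" and "a < n" and "j < m" and "A j = a"
    and "0 \<le> t a j" and "t a j \<le> T"
  shows "ennreal (t a j)
    \<le> (\<integral>\<^sup>+D. ennreal (task_cost t tb D a j) \<partial>measure_pmf (joint n ((threat_profile n T A)(a := \<tau>))))"
proof -
  define B where "B = {..<n} - {a}"
  define P where "P = Pi_pmf B (\<lambda>_. 0) (threat_profile n T A)"
  have row: "ennreal (t a j) \<le> (\<integral>\<^sup>+f. ennreal (task_cost t tb (f(a := y)) a j) \<partial>measure_pmf P)" for y
  proof -
    define q where "q = measure_pmf.prob (deterrent_pmf T (n - 1)) {x. y j < x}"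
    have "ennreal (t a j) \<le> ennreal (max (y j) (t a j) * q ^ (n - 1))"
      unfolding q_def using deterrent_pmf_deters assms(2,6,7) by (intro ennreal_leI)
    also have "\<dots> = ennreal (max (y j) (t a j)) * ennreal q ^ (n - 1)"
      using assms(6) by (simp add: ennreal_mult ennreal_power q_def)
    also have "\<dots> = (\<integral>\<^sup>+f. ennreal (max (y j) (t a j)) * (\<Prod>b\<in>B. indicator {d. y j < d j} (f b)) \<partial>measure_pmf P)"
      unfolding P_def B_def q_def
      by (simp add: nn_integral_cmult threat_profile_outbid[where A = A and j = j, OF assms(3,5)])
    also have "\<dots> \<le> (\<integral>\<^sup>+f. ennreal (task_cost t tb (f(a := y)) a j) \<partial>measure_pmf P)"
    proof (intro nn_integral_mono)
      fix f
      show "ennreal (max (y j) (t a j)) * (\<Prod>b\<in>B. indicator {d. y j < d j} (f b))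
          \<le> ennreal (task_cost t tb (f(a := y)) a j)"
      proof (cases "\<forall>b\<in>B. y j < f b j")
        case True
        then have "greedy_assign tb (f(a := y)) j = a"
          using assms(3) unfolding B_def by (intro greedy_assign_strict_min[OF assms(1,4)]) auto
        then show ?thesis using True unfolding task_cost_def by simp
      next
        case False
        then have "(\<Prod>b\<in>B. indicator {d. y j < d j} (f b) :: ennreal) = 0"
          unfolding B_def by (intro prod_zero) (auto simp: indicator_def)
        then show ?thesis by (metis mult_zero_right zero_le)
      qed
    qed
    finally show ?thesis .
  qed
  have "ennreal (t a j) \<le> (\<integral>\<^sup>+y. (\<integral>\<^sup>+f. ennreal (task_cost t tb (f(a := y)) a j) \<partial>measure_pmf P) \<partial>measure_pmf \<tau>)"
    using nn_integral_mono[OF row, of \<tau>] by simp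
  also have "\<dots> = (\<integral>\<^sup>+D. ennreal (task_cost t tb D a j) \<partial>measure_pmf (joint n ((threat_profile n T A)(a := \<tau>))))"
    unfolding joint_fun_upd[OF assms(3)] P_def B_def by (simp add: nn_integral_pair_pmf')
  finally show ?thesis .
qed

lemma sum_task_cost_le_load:
  assumes "J \<subseteq> {..<m}" and "\<forall>j<m. 0 \<le> t i j"
  shows "(\<Sum>j\<in>J. ennreal (task_cost t tb D i j)) \<le> ennreal (load m t tb D i)"
proof -
  have "(\<Sum>j\<in>J. ennreal (task_cost t tb D i j)) = ennreal (\<Sum>j\<in>J. task_cost t tb D i j)"
    using assms by (intro sum_ennreal) (auto intro: task_cost_nonneg)
  also have "\<dots> \<le> ennreal (load m t tb D i)"
    unfolding load_eq_sum_task_cost using assms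
    by (intro ennreal_leI sum_mono2) (auto intro: task_cost_nonneg)
  finally show ?thesis .
qed

lemma threat_profile_mixed_NE:
  assumes "valid_tiebreak n m tb" and "0 < T" and "A \<in> {..<m} \<rightarrow>\<^sub>E {..<n}"
    and "\<forall>i<n. \<forall>j<m. 0 \<le> t i j \<and> t i j \<le> T"
  shows "mixed_NE n m t tb (threat_profile n T A)"
  unfolding mixed_NE_def
proof (intro conjI allI impI)
  show "valid_profile n m (threat_profile n T A)"
    using assms(2) by (intro valid_profile_threat_profile) simp
  fix a \<tau> assume "a < n"
  define J where "J = {j. j < m \<and> A j = a}"
  have J: "J \<subseteq> {..<m}" "finite J" unfolding J_def by auto
  have "exp_cost n m t tb (threat_profile n T A) a = ennreal (\<Sum>j\<in>J. t a j)"
    unfolding J_def using assms \<open>a < n\<close> by (simp add: exp_cost_threat_profile)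
  also have "\<dots> = (\<Sum>j\<in>J. ennreal (t a j))"
    using assms(4) \<open>a < n\<close> J(1) by (intro sum_ennreal[symmetric]) auto
  also have "\<dots> \<le> (\<Sum>j\<in>J. \<integral>\<^sup>+D. ennreal (task_cost t tb D a j) \<partial>measure_pmf (joint n ((threat_profile n T A)(a := \<tau>))))"
    using assms \<open>a < n\<close> unfolding J_def
    by (intro sum_mono threat_profile_deviation_task_cost) auto
  also have "\<dots> = (\<integral>\<^sup>+D. (\<Sum>j\<in>J. ennreal (task_cost t tb D a j)) \<partial>measure_pmf (joint n ((threat_profile n T A)(a := \<tau>))))"
    by (rule nn_integral_sum[symmetric]) simp
  also have "\<dots> \<le> exp_cost n m t tb ((threat_profile n T A)(a := \<tau>)) a"
    unfolding exp_cost_def using J(1) assms(4) \<open>a < n\<close>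
    by (intro nn_integral_mono sum_task_cost_le_load) auto
  finally show "exp_cost n m t tb (threat_profile n T A) a \<le> exp_cost n m t tb ((threat_profile n T A)(a := \<tau>)) a" .
qed

lemma opt_makespan_attained:
  assumes "1 \<le> n"
  obtains A where "A \<in> {..<m} \<rightarrow>\<^sub>E {..<n}"
    and "Max ((\<lambda>i. \<Sum>j\<in>{j. j < m \<and> A j = i}. t i j) ` {..<n}) = opt_makespan n m t"
proof -
  have "(\<lambda>j\<in>{..<m}. 0) \<in> {..<m} \<rightarrow>\<^sub>E {..<n}" using assms by auto
  then have "{..<m} \<rightarrow>\<^sub>E {..<n} \<noteq> {}" by blast
  then have "opt_makespan n m t
      \<in> (\<lambda>A. Max ((\<lambda>i. \<Sum>j\<in>{j. j < m \<and> A j = i}. t i j) ` {..<n})) ` ({..<m} \<rightarrow>\<^sub>E {..<n})"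
    unfolding opt_makespan_def by (intro Min_in) (auto simp: finite_PiE)
  then show ?thesis using that by auto
qed

theorem theorem8:
  fixes n m :: nat and t :: "nat \<Rightarrow> nat \<Rightarrow> real"
    and tb :: "nat \<Rightarrow> (nat \<Rightarrow> real) \<Rightarrow> nat"
  assumes "n \<ge> 1"
    and "\<forall>i<n. \<forall>j<m. t i j \<ge> 0"
    and "valid_tiebreak n m tb"
  shows "\<exists>\<sigma>. mixed_NE n m t tb \<sigma> \<and> exp_makespan n m t tb \<sigma> = ennreal (opt_makespan n m t)"
proof -
  obtain A where A: "A \<in> {..<m} \<rightarrow>\<^sub>E {..<n}"
    and opt: "Max ((\<lambda>i. \<Sum>j\<in>{j. j < m \<and> A j = i}. t i j) ` {..<n}) = opt_makespan n m t"
    using opt_makespan_attained assms(1) by blast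
  define T where "T = Max (insert 1 ((\<lambda>(i, j). t i j) ` ({..<n} \<times> {..<m})))"
  have "1 \<le> T" unfolding T_def by (intro Max_ge) auto
  moreover have "\<forall>i<n. \<forall>j<m. 0 \<le> t i j \<and> t i j \<le> T"
    using assms(2) unfolding T_def by (auto intro: Max_ge)
  ultimately have "mixed_NE n m t tb (threat_profile n T A)"
    and "exp_makespan n m t tb (threat_profile n T A) = ennreal (opt_makespan n m t)"
    using threat_profile_mixed_NE[OF assms(3) _ A] exp_makespan_threat_profile[OF assms(3) _ A] assms(2) opt
    by auto
  then show ?thesis by blast
qed

end
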